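(* Let $K\ge3$, $V\ge1$, let $\phi_1,\dots,\phi_K\in\Delta_{V-1}$ have strictly positive entries, $p\in\Delta_{V-1}$, and $H(\theta)=\sum_{v=1}^Vp_v\log\big(\sum_{k=1}^K\theta_k\phi_k(v)\big)$. Let $\theta^*$ be a maximizer of $H$ on $\Delta_{K-1}$ with all coordinates strictly positive. Assume (B1): for every $v$, $\max_k\phi_k(v)$ is attained at a unique index $k(v)$; and that $\phi$ is $\varepsilon$-sparse with $\varepsilon<\varepsilon_0$. Let $X=\mathrm{diag}(1/\theta^*_1,\dots,1/\theta^*_K)$, $Y=-\nabla^2H(\theta^* )$, and $Z=X^{-1/2}YX^{-1/2}$. Then there exists $C>0$, independent of $\varepsilon$, such that $$\frac{\|Z-I\|_F}{\sqrt{\lambda_{\min}(Z)}}\le C\varepsilon.$$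
   Context: $\Delta_{d-1}=\{x\in\mathbb{R}^d:x_i\ge0,\sum_ix_i=1\}$. $X$ is the Hessian of $\theta\mapsto\mathrm{KL}(\theta^*|\theta)=\sum_k\theta^*_k\log(\theta^*_k/\theta_k)$ at $\theta=\theta^*$. $\phi$ is $\varepsilon$-sparse if $\varepsilon=\max_v\frac{\sum_{j\ne k(v)}\phi_j(v)}{\phi_{k(v)}(v)}$. With $\theta^*_{\min}=\min_k\theta^*_k$, $\theta^*_{\max}=\max_k\theta^*_k$, $C^{(1)}_{\max}=(\theta^*_{\max})^{1/2}/(\theta^*_{\min})^{3/2}$, $C^{(2)}_{\max}=\theta^*_{\max}/(\theta^*_{\min})^2$, and $F(\varepsilon)=4(C^{(2)}_{\max})^2K+K(K-1)(2C^{(1)}_{\max}+C^{(2)}_{\max}\varepsilon)^2$, $\varepsilon_0>0$ is the unique root of $\varepsilon\sqrt{F(\varepsilon)}=1/2$. $\lambda_{\min}(Z)$ is the smallest eigenvalue of the symmetric matrix $Z$, $\|\cdot\|_F$ the Frobenius norm. *)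

theory Defs
  imports "HOL-Analysis.Analysis"
begin

text \<open>Topic-model setting. Topics are indexed by a finite type 'k (K = CARD('k)),
  vocabulary words by naturals v < V. phi k v is the probability of word v in topic k.\<close>

definition in_simplex_vec :: "real^'k \<Rightarrow> bool" where
  "in_simplex_vec x \<longleftrightarrow> (\<forall>k. x $ k \<ge> 0) \<and> (\<Sum>k\<in>UNIV. x $ k) = 1"

definition in_simplex_nat :: "nat \<Rightarrow> (nat \<Rightarrow> real) \<Rightarrow> bool" where
  "in_simplex_nat V x \<longleftrightarrow> (\<forall>v<V. x v \<ge> 0) \<and> (\<Sum>v<V. x v) = 1"

definition Hfun :: "nat \<Rightarrow> (nat \<Rightarrow> real) \<Rightarrow> ('k::finite \<Rightarrow> nat \<Rightarrow> real) \<Rightarrow> real^'k \<Rightarrow> real" where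
  "Hfun V p phi \<theta> = (\<Sum>v<V. p v * ln (\<Sum>k\<in>UNIV. \<theta> $ k * phi k v))"

definition hessian :: "(real^'k \<Rightarrow> real) \<Rightarrow> real^'k \<Rightarrow> real^'k^'k" where
  "hessian f x = (\<chi> j k. deriv (\<lambda>s. deriv (\<lambda>t. f (x + t *\<^sub>R axis j 1 + s *\<^sub>R axis k 1)) 0) 0)"

definition diag_mat :: "('k \<Rightarrow> real) \<Rightarrow> real^'k^'k" where
  "diag_mat d = (\<chi> i j. if i = j then d i else 0)"

definition frob_norm :: "real^'k^'k \<Rightarrow> real" where
  "frob_norm A = sqrt (\<Sum>i\<in>UNIV. \<Sum>j\<in>UNIV. (A $ i $ j)\<^sup>2)"

definition lambda_min :: "real^'k^'k \<Rightarrow> real" where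
  "lambda_min A = Min {\<mu>. \<exists>x. x \<noteq> 0 \<and> A *v x = \<mu> *\<^sub>R x}"

definition kmax :: "('k \<Rightarrow> nat \<Rightarrow> real) \<Rightarrow> nat \<Rightarrow> 'k" where
  "kmax phi v = (THE k. \<forall>j. phi j v \<le> phi k v)"

definition sparsity :: "nat \<Rightarrow> ('k::finite \<Rightarrow> nat \<Rightarrow> real) \<Rightarrow> real" where
  "sparsity V phi = Max ((\<lambda>v. (\<Sum>j\<in>UNIV - {kmax phi v}. phi j v) / phi (kmax phi v) v) ` {..<V})"

definition Cmax1 :: "real \<Rightarrow> real \<Rightarrow> real" where
  "Cmax1 tmin tmax = sqrt tmax / (tmin powr (3/2))"

definition Cmax2 :: "real \<Rightarrow> real \<Rightarrow> real" where
  "Cmax2 tmin tmax = tmax / tmin\<^sup>2"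

definition Ffun :: "nat \<Rightarrow> real \<Rightarrow> real \<Rightarrow> real \<Rightarrow> real" where
  "Ffun K tmin tmax e = 4 * (Cmax2 tmin tmax)\<^sup>2 * real K
     + real K * (real K - 1) * (2 * Cmax1 tmin tmax + Cmax2 tmin tmax * e)\<^sup>2"

definition eps0 :: "nat \<Rightarrow> real \<Rightarrow> real \<Rightarrow> real" where
  "eps0 K tmin tmax = (THE e. e > 0 \<and> e * sqrt (Ffun K tmin tmax e) = 1/2)"

definition vmin :: "real^'k \<Rightarrow> real" where
  "vmin x = Min (range (\<lambda>k. x $ k))"

definition vmax :: "real^'k \<Rightarrow> real" where
  "vmax x = Max (range (\<lambda>k. x $ k))"

end

theory Submission
  imports Defs
begin

text \<open>Write r_k(v) = phi_k(v) / sum_i theta_i phi_i(v). The Hessian of H at theta is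
  -sum_v p_v r_j(v) r_k(v), so Z_jk = sqrt(theta_j theta_k) sum_v p_v r_j(v) r_k(v), and
  stationarity of the interior maximiser along the edges of the simplex gives
  sum_v p_v r_k(v) = 1 for every k. By eps-sparsity, r_j(v) <= eps / theta_min unless j = k(v),
  and 1 - theta_k(v) r_k(v)(v) <= eps / theta_min. Hence every entry of Z - I is bounded by
  2 eps / theta_min and ||Z - I||_F <= 2 K eps / theta_min, which is below 1/2 when eps < eps_0.
  Every eigenvalue mu of the symmetric matrix Z satisfies |mu - 1| <= ||Z - I||_F, so
  lambda_min(Z) >= 1/2 and the ratio is at most 2 sqrt 2 K eps / theta_min.\<close>

lemma frob_norm_nonneg: "0 \<le> frob_norm A"
  by (simp add: frob_norm_def sum_nonneg)

lemma norm_matrix_vector_mult_le_frob_norm: "norm (A *v x) \<le> frob_norm A * norm x"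
proof -
  have sq_norm: "(norm y)\<^sup>2 = (\<Sum>i\<in>UNIV. (y $ i)\<^sup>2)" for y :: "real^'n"
    unfolding power2_norm_eq_inner by (simp add: inner_vec_def power2_eq_square)
  have "(norm (A *v x))\<^sup>2 = (\<Sum>i\<in>UNIV. (A $ i \<bullet> x)\<^sup>2)"
    by (simp add: sq_norm matrix_vector_mult_def inner_vec_def)
  also have "\<dots> \<le> (\<Sum>i\<in>UNIV. (norm (A $ i))\<^sup>2 * (norm x)\<^sup>2)"
  proof (intro sum_mono)
    fix i
    have "\<bar>A $ i \<bullet> x\<bar> \<le> norm (A $ i) * norm x"
      by (rule Cauchy_Schwarz_ineq2)
    then show "(A $ i \<bullet> x)\<^sup>2 \<le> (norm (A $ i))\<^sup>2 * (norm x)\<^sup>2"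
      by (metis abs_ge_zero power2_abs power_mono power_mult_distrib)
  qed
  also have "\<dots> = (frob_norm A * norm x)\<^sup>2"
    by (simp add: frob_norm_def power_mult_distrib sq_norm sum_distrib_right sum_nonneg)
  finally show ?thesis
    by (rule power2_le_imp_le) (simp add: frob_norm_nonneg)
qed

lemma eigenvalue_dist_one_le_frob_norm:
  assumes "x \<noteq> 0" "A *v x = \<mu> *\<^sub>R x"
  shows "\<bar>\<mu> - 1\<bar> \<le> frob_norm (A - mat 1)"
proof -
  have "(A - mat 1) *v x = (\<mu> - 1) *\<^sub>R x"
    using assms(2) by (simp add: matrix_vector_mult_diff_rdistrib algebra_simps)
  then have "\<bar>\<mu> - 1\<bar> * norm x \<le> frob_norm (A - mat 1) * norm x"
    using norm_matrix_vector_mult_le_frob_norm[of "A - mat 1" x] by simp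
  then show ?thesis
    using assms(1) by simp
qed

lemma frob_norm_le_entrywise:
  fixes A :: "real^'n^'n" and b :: real
  assumes "\<And>i j. \<bar>A $ i $ j\<bar> \<le> b"
  shows "frob_norm A \<le> CARD('n) * b"
proof -
  have "0 \<le> b"
    using abs_ge_zero assms order_trans by blast
  have "frob_norm A \<le> sqrt (\<Sum>i\<in>(UNIV::'n set). \<Sum>j\<in>(UNIV::'n set). b\<^sup>2)"
    unfolding frob_norm_def
  proof (intro real_sqrt_le_mono sum_mono)
    fix i j
    have "\<bar>A $ i $ j\<bar> \<le> \<bar>b\<bar>"
      using assms \<open>0 \<le> b\<close> by simp
    then show "(A $ i $ j)\<^sup>2 \<le> b\<^sup>2"
      by (simp only: abs_le_square_iff)
  qed
  also have "\<dots> = CARD('n) * b"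
    using \<open>0 \<le> b\<close> by (simp add: real_sqrt_mult power2_eq_square[of "real _"])
  finally show ?thesis .
qed

lemma symmetric_matrix_inner:
  assumes "transpose A = A"
  shows "x \<bullet> (A *v y) = (A *v x) \<bullet> (y :: real^'n)"
  using dot_lmul_matrix[of x A y] transpose_matrix_vector[of A x] by (simp add: assms)

lemma finite_eigenvalues_symmetric:
  assumes "transpose A = A"
  shows "finite {\<mu>. \<exists>x. x \<noteq> 0 \<and> A *v x = \<mu> *\<^sub>R (x :: real^'n)}" (is "finite ?E")
proof -
  define ev where "ev \<mu> = (SOME x. x \<noteq> 0 \<and> A *v x = \<mu> *\<^sub>R x)" for \<mu>
  have ev: "ev \<mu> \<noteq> 0" "A *v ev \<mu> = \<mu> *\<^sub>R ev \<mu>" if "\<mu> \<in> ?E" for \<mu>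
    using that unfolding ev_def by (metis (mono_tags, lifting) mem_Collect_eq someI_ex)+
  have orth: "ev \<mu> \<bullet> ev \<nu> = 0" if "\<mu> \<in> ?E" "\<nu> \<in> ?E" "\<mu> \<noteq> \<nu>" for \<mu> \<nu>
  proof -
    have "\<nu> * (ev \<mu> \<bullet> ev \<nu>) = ev \<mu> \<bullet> (A *v ev \<nu>)"
      using ev(2)[OF that(2)] by simp
    also have "\<dots> = (A *v ev \<mu>) \<bullet> ev \<nu>"
      by (rule symmetric_matrix_inner[OF assms])
    also have "\<dots> = \<mu> * (ev \<mu> \<bullet> ev \<nu>)"
      using ev(2)[OF that(1)] by simp
    finally show ?thesis
      using that(3) by simp
  qed
  have "inj_on ev ?E"
  proof (rule inj_onI, rule ccontr)
    fix \<mu> \<nu>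
    assume "\<mu> \<in> ?E" "\<nu> \<in> ?E" "ev \<mu> = ev \<nu>" "\<mu> \<noteq> \<nu>"
    then show False
      using orth[of \<mu> \<nu>] ev(1)[of \<mu>] by simp
  qed
  moreover have "independent (ev ` ?E)"
  proof (rule pairwise_orthogonal_independent)
    show "pairwise orthogonal (ev ` ?E)"
      using orth by (auto simp: pairwise_def orthogonal_def)
    show "0 \<notin> ev ` ?E"
      using ev(1) by force
  qed
  then have "finite (ev ` ?E)"
    using independent_bound by blast
  ultimately show ?thesis
    using finite_imageD by blast
qed

lemma quadratic_nonneg_imp_linear_coeff_eq_0:
  fixes c d :: real
  assumes "\<And>t. 0 \<le> 2 * t * c + t\<^sup>2 * d"
  shows "c = 0"
proof (rule ccontr)
  assume "c \<noteq> 0"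
  define t where "t = - c / (\<bar>d\<bar> + 1)"
  have "0 < \<bar>d\<bar> + 1"
    by simp
  have "t\<^sup>2 * d \<le> t\<^sup>2 * (\<bar>d\<bar> + 1)"
    by (simp add: mult_left_mono)
  also have "\<dots> = c\<^sup>2 / (\<bar>d\<bar> + 1)"
    using \<open>0 < \<bar>d\<bar> + 1\<close> by (simp add: t_def power2_eq_square)
  finally have "2 * t * c + t\<^sup>2 * d \<le> - c\<^sup>2 / (\<bar>d\<bar> + 1)"
    by (simp add: t_def power2_eq_square)
  also have "\<dots> < 0"
    using \<open>c \<noteq> 0\<close> \<open>0 < \<bar>d\<bar> + 1\<close> by (simp add: divide_simps)
  finally show False
    using assms[of t] by simp
qed

text \<open>A minimiser of the Rayleigh quotient on the unit sphere is an eigenvector.\<close>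
lemma symmetric_matrix_has_eigenvalue:
  assumes "transpose A = A"
  shows "\<exists>\<mu> x. x \<noteq> 0 \<and> A *v x = \<mu> *\<^sub>R (x :: real^'n)"
proof -
  define q where "q x = x \<bullet> (A *v x)" for x :: "real^'n"
  have "continuous_on (sphere 0 1) q"
    unfolding q_def by (intro continuous_intros linear_continuous_on matrix_vector_mul_bounded_linear)
  moreover have "sphere (0::real^'n) 1 \<noteq> {}"
    by simp
  ultimately obtain x where x: "norm x = 1" and x_min: "\<And>y. norm y = 1 \<Longrightarrow> q x \<le> q y"
    using continuous_attains_inf[OF compact_sphere] by (metis mem_sphere_0)
  define l where "l = q x"
  have q_ge: "l * (norm z)\<^sup>2 \<le> q z" for z
  proof (cases "z = 0")
    case False
    have "l \<le> q ((1 / norm z) *\<^sub>R z)"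
      using False x_min by (simp add: l_def)
    also have "\<dots> = q z / (norm z)\<^sup>2"
      by (simp add: q_def matrix_vector_mult_scaleR power2_eq_square)
    finally show ?thesis
      using False by (simp add: divide_simps)
  qed (simp add: q_def)
  define w where "w = A *v x - l *\<^sub>R x"
  have "0 \<le> 2 * t * (w \<bullet> w) + t\<^sup>2 * (q w - l * (w \<bullet> w))" for t
  proof -
    have "x \<bullet> x = 1"
      using x power2_norm_eq_inner[of x] by simp
    then have "(norm (x + t *\<^sub>R w))\<^sup>2 = 1 + 2 * t * (x \<bullet> w) + t\<^sup>2 * (w \<bullet> w)"
      unfolding power2_norm_eq_inner
      by (simp add: inner_add_left inner_add_right inner_commute power2_eq_square algebra_simps)
    moreover have "q (x + t *\<^sub>R w) = l + 2 * t * ((A *v x) \<bullet> w) + t\<^sup>2 * q w"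
      using symmetric_matrix_inner[OF assms, of x w]
      by (simp add: q_def l_def matrix_vector_right_distrib matrix_vector_mult_scaleR
          inner_add_left inner_add_right inner_commute power2_eq_square algebra_simps)
    moreover have "(A *v x) \<bullet> w = w \<bullet> w + l * (x \<bullet> w)"
      by (simp add: w_def inner_diff_left inner_diff_right inner_commute algebra_simps)
    ultimately show ?thesis
      using q_ge[of "x + t *\<^sub>R w"] by (simp add: algebra_simps)
  qed
  then have "w \<bullet> w = 0"
    by (rule quadratic_nonneg_imp_linear_coeff_eq_0)
  then have "A *v x = l *\<^sub>R x"
    by (simp add: w_def)
  moreover have "x \<noteq> 0"
    using x by auto
  ultimately show ?thesis
    by blast
qed

lemma lambda_min_eigenvalue:
  assumes "transpose A = A"
  shows "\<exists>x. x \<noteq> 0 \<and> A *v x = lambda_min A *\<^sub>R (x :: real^'n)"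
proof -
  have "lambda_min A \<in> {\<mu>. \<exists>x. x \<noteq> 0 \<and> A *v x = \<mu> *\<^sub>R (x :: real^'n)}"
    unfolding lambda_min_def using assms
    by (intro Min_in finite_eigenvalues_symmetric) (auto dest: symmetric_matrix_has_eigenvalue)
  then show ?thesis
    by simp
qed

lemma frob_norm_div_sqrt_lambda_min_le:
  assumes "transpose A = A" and "frob_norm (A - mat 1) \<le> 1/2"
  shows "frob_norm (A - mat 1) / sqrt (lambda_min A) \<le> sqrt 2 * frob_norm (A - mat 1)"
proof -
  obtain x where "x \<noteq> 0" "A *v x = lambda_min A *\<^sub>R x"
    using lambda_min_eigenvalue[OF assms(1)] by blast
  then have "1/2 \<le> lambda_min A"
    using eigenvalue_dist_one_le_frob_norm assms(2) by fastforce
  then have "frob_norm (A - mat 1) / sqrt (lambda_min A) \<le> frob_norm (A - mat 1) / sqrt (1/2)"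
    by (intro divide_left_mono frob_norm_nonneg) auto
  also have "\<dots> = sqrt 2 * frob_norm (A - mat 1)"
    by (simp add: real_sqrt_divide field_simps)
  finally show ?thesis .
qed

lemma inverse_le_Cmax1:
  assumes "0 < a" "a \<le> b"
  shows "1 / a \<le> Cmax1 a b"
proof -
  have "a powr (3/2) = a powr (1 + 1/2)"
    by simp
  also have "\<dots> = a powr 1 * a powr (1/2)"
    by (rule powr_add)
  also have "\<dots> = a * sqrt a"
    using assms(1) by (simp add: powr_half_sqrt)
  finally have "a powr (3/2) = a * sqrt a" .
  have "1 / a = sqrt a / (a * sqrt a)"
    using assms(1) by simp
  also have "\<dots> \<le> sqrt b / (a * sqrt a)"
    using assms by (intro divide_right_mono) auto
  also have "\<dots> = Cmax1 a b"
    by (simp add: Cmax1_def \<open>a powr (3/2) = a * sqrt a\<close>)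
  finally show ?thesis .
qed

lemma inverse_le_Cmax2:
  assumes "0 < a" "a \<le> b"
  shows "1 / a \<le> Cmax2 a b"
  using assms by (simp add: Cmax2_def power2_eq_square divide_simps)

lemma real_mult_pred_nonneg: "0 \<le> real K * (real K - 1)"
  by (cases K) auto

lemma Ffun_lower_bound:
  assumes "0 < a" "a \<le> b" "0 \<le> e"
  shows "(2 * real K / a)\<^sup>2 \<le> Ffun K a b e"
proof -
  have "(1 / a)\<^sup>2 \<le> (Cmax2 a b)\<^sup>2"
    using inverse_le_Cmax2[OF assms(1,2)] assms(1) by (intro power_mono) auto
  then have first: "4 * (1 / a)\<^sup>2 * real K \<le> 4 * (Cmax2 a b)\<^sup>2 * real K"
    by (simp add: mult_right_mono)
  have "0 \<le> Cmax2 a b * e"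
    using assms by (simp add: Cmax2_def)
  then have "2 * (1 / a) \<le> 2 * Cmax1 a b + Cmax2 a b * e"
    using inverse_le_Cmax1[OF assms(1,2)] by simp
  then have "(2 * (1 / a))\<^sup>2 \<le> (2 * Cmax1 a b + Cmax2 a b * e)\<^sup>2"
    using assms(1) by (intro power_mono) auto
  then have second: "real K * (real K - 1) * (2 * (1 / a))\<^sup>2
      \<le> real K * (real K - 1) * (2 * Cmax1 a b + Cmax2 a b * e)\<^sup>2"
    using real_mult_pred_nonneg by (rule mult_left_mono)
  have "(2 * real K / a)\<^sup>2 = 4 * (1 / a)\<^sup>2 * real K + real K * (real K - 1) * (2 * (1 / a))\<^sup>2"
    using assms(1) by (simp add: power2_eq_square field_simps)
  with first second show ?thesis
    unfolding Ffun_def by linarith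
qed

lemma Ffun_mono:
  assumes "0 < a" "a \<le> b" "0 \<le> e" "e \<le> e'"
  shows "Ffun K a b e \<le> Ffun K a b e'"
proof -
  have "0 \<le> Cmax1 a b" "0 \<le> Cmax2 a b"
    using assms by (simp_all add: Cmax1_def Cmax2_def)
  then have "(2 * Cmax1 a b + Cmax2 a b * e)\<^sup>2 \<le> (2 * Cmax1 a b + Cmax2 a b * e')\<^sup>2"
    using assms(3,4) by (intro power_mono add_left_mono mult_left_mono) auto
  then show ?thesis
    unfolding Ffun_def using real_mult_pred_nonneg by (intro add_left_mono mult_left_mono)
qed

lemma strict_mono_on_eps_sqrt_Ffun:
  assumes "0 < a" "a \<le> b" "K \<ge> 1"
  shows "strict_mono_on {0..} (\<lambda>e. e * sqrt (Ffun K a b e))"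
proof (rule strict_mono_onI)
  fix e e' :: real
  assume "e \<in> {0..}" "e' \<in> {0..}" "e < e'"
  have "0 < (2 * real K / a)\<^sup>2"
    using assms by simp
  also have "\<dots> \<le> Ffun K a b e'"
    using Ffun_lower_bound assms \<open>e' \<in> {0..}\<close> by simp
  finally have "0 < sqrt (Ffun K a b e')"
    by simp
  have "e * sqrt (Ffun K a b e) \<le> e * sqrt (Ffun K a b e')"
    using Ffun_mono[OF assms(1,2)] \<open>e \<in> {0..}\<close> \<open>e < e'\<close> by (simp add: mult_left_mono)
  also have "\<dots> < e' * sqrt (Ffun K a b e')"
    using \<open>0 < sqrt (Ffun K a b e')\<close> \<open>e < e'\<close> by simp
  finally show "e * sqrt (Ffun K a b e) < e' * sqrt (Ffun K a b e')" .
qed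

lemma eps0_root:
  assumes "0 < a" "a \<le> b" "b \<le> 1" "K \<ge> 1"
  shows "0 < eps0 K a b" and "eps0 K a b * sqrt (Ffun K a b (eps0 K a b)) = 1/2"
proof -
  let ?h = "\<lambda>e. e * sqrt (Ffun K a b e)"
  have "2 \<le> 2 * real K / a"
    using assms by (simp add: divide_simps)
  also have "\<dots> \<le> sqrt (Ffun K a b 1)"
    using Ffun_lower_bound[OF assms(1,2), of 1 K] assms(1) real_le_rsqrt by simp
  finally have "1/2 \<le> ?h 1"
    by simp
  moreover have "continuous_on {0..1} ?h"
    unfolding Ffun_def by (intro continuous_intros)
  ultimately obtain e where e: "0 \<le> e" "?h e = 1/2"
    using IVT'[of ?h 0 "1/2" 1] by auto
  have "\<exists>!e. 0 < e \<and> ?h e = 1/2"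
  proof (rule ex1I[of _ e])
    show "0 < e \<and> ?h e = 1/2"
      using e by (cases "e = 0") auto
    have "inj_on ?h {0..}"
      by (rule strict_mono_on_imp_inj_on[OF strict_mono_on_eps_sqrt_Ffun[OF assms(1,2,4)]])
    then show "y = e" if "0 < y \<and> ?h y = 1/2" for y
      by (rule inj_onD) (use that e in auto)
  qed
  then have "0 < eps0 K a b \<and> ?h (eps0 K a b) = 1/2"
    unfolding eps0_def by (rule theI')
  then show "0 < eps0 K a b" "?h (eps0 K a b) = 1/2"
    by auto
qed

lemma less_eps0_imp_less_half:
  assumes "0 < a" "a \<le> b" "b \<le> 1" "K \<ge> 1" "0 \<le> e" "e < eps0 K a b"
  shows "2 * real K * e / a < 1/2"
proof -
  have "2 * real K / a \<le> sqrt (Ffun K a b e)"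
    by (rule real_le_rsqrt) (rule Ffun_lower_bound[OF assms(1,2,5)])
  then have "e * (2 * real K / a) \<le> e * sqrt (Ffun K a b e)"
    by (rule mult_left_mono) (rule assms(5))
  then have "2 * real K * e / a \<le> e * sqrt (Ffun K a b e)"
    by (simp add: ac_simps)
  also have "\<dots> < eps0 K a b * sqrt (Ffun K a b (eps0 K a b))"
    using strict_mono_onD[OF strict_mono_on_eps_sqrt_Ffun[OF assms(1,2,4)]]
      eps0_root(1)[OF assms(1-4)] assms(5,6) by simp
  also have "\<dots> = 1/2"
    by (rule eps0_root(2)[OF assms(1-4)])
  finally show ?thesis .
qed

definition mixture :: "('k::finite \<Rightarrow> nat \<Rightarrow> real) \<Rightarrow> real^'k \<Rightarrow> nat \<Rightarrow> real" where
  "mixture phi \<theta> v = (\<Sum>k\<in>UNIV. \<theta> $ k * phi k v)"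

lemma mixture_add [simp]: "mixture phi (x + y) v = mixture phi x v + mixture phi y v"
  by (simp add: mixture_def distrib_right sum.distrib)

lemma mixture_diff [simp]: "mixture phi (x - y) v = mixture phi x v - mixture phi y v"
  by (simp add: mixture_def left_diff_distrib sum_subtractf)

lemma mixture_scaleR [simp]: "mixture phi (t *\<^sub>R x) v = t * mixture phi x v"
  by (simp add: mixture_def sum_distrib_left mult.assoc)

lemma mixture_axis [simp]: "mixture phi (axis j 1) v = phi j v"
  unfolding mixture_def axis_def by (simp add: if_distrib[where f = "\<lambda>x. x * _"] cong: if_cong)

lemma Hfun_eq_mixture: "Hfun V p phi \<theta> = (\<Sum>v<V. p v * ln (mixture phi \<theta> v))"
  by (simp add: Hfun_def mixture_def)

lemma has_real_derivative_Hfun_line: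
  assumes "\<And>v. v < V \<Longrightarrow> 0 < mixture phi \<theta> v"
  shows "((\<lambda>t. Hfun V p phi (\<theta> + t *\<^sub>R d)) has_real_derivative
           (\<Sum>v<V. p v * mixture phi d v / mixture phi \<theta> v)) (at 0)"
  unfolding Hfun_eq_mixture mixture_add mixture_scaleR
  using assms by (auto intro!: derivative_eq_intros simp: field_simps)

lemma hessian_Hfun:
  assumes "\<And>v. v < V \<Longrightarrow> 0 < mixture phi \<theta> v"
  shows "hessian (Hfun V p phi) \<theta> $ j $ k
           = - (\<Sum>v<V. p v * phi j v * phi k v / (mixture phi \<theta> v)\<^sup>2)"
proof -
  have mixture_ne: "\<forall>v<V. mixture phi \<theta> v \<noteq> 0"
    using assms by fastforce
  have "\<forall>\<^sub>F u in nhds 0. \<forall>v\<in>{..<V}. 0 < mixture phi \<theta> v + u * phi k v"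
  proof (rule eventually_ball_finite)
    show "\<forall>v\<in>{..<V}. \<forall>\<^sub>F u in nhds 0. 0 < mixture phi \<theta> v + u * phi k v"
    proof
      fix v assume "v \<in> {..<V}"
      have "((\<lambda>u. mixture phi \<theta> v + u * phi k v) \<longlongrightarrow> mixture phi \<theta> v) (nhds 0)"
        by (auto intro!: tendsto_eq_intros filterlim_ident)
      then show "\<forall>\<^sub>F u in nhds 0. 0 < mixture phi \<theta> v + u * phi k v"
        using assms \<open>v \<in> {..<V}\<close> by (auto dest: order_tendstoD(1))
    qed
  qed simp
  then have "\<forall>\<^sub>F u in nhds 0.
      deriv (\<lambda>t. Hfun V p phi (\<theta> + t *\<^sub>R axis j 1 + u *\<^sub>R axis k 1)) 0
        = (\<Sum>v<V. p v * phi j v / (mixture phi \<theta> v + u * phi k v))"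
  proof (rule eventually_mono)
    fix u assume "\<forall>v\<in>{..<V}. 0 < mixture phi \<theta> v + u * phi k v"
    then have "((\<lambda>t. Hfun V p phi ((\<theta> + u *\<^sub>R axis k 1) + t *\<^sub>R axis j 1)) has_real_derivative
        (\<Sum>v<V. p v * phi j v / (mixture phi \<theta> v + u * phi k v))) (at 0)"
      using has_real_derivative_Hfun_line[of V phi "\<theta> + u *\<^sub>R axis k 1" p "axis j 1"] by simp
    then show "deriv (\<lambda>t. Hfun V p phi (\<theta> + t *\<^sub>R axis j 1 + u *\<^sub>R axis k 1)) 0
        = (\<Sum>v<V. p v * phi j v / (mixture phi \<theta> v + u * phi k v))"
      by (simp add: DERIV_imp_deriv add_ac)
  qed
  moreover have "((\<lambda>u. \<Sum>v<V. p v * phi j v / (mixture phi \<theta> v + u * phi k v)) has_real_derivative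
      - (\<Sum>v<V. p v * phi j v * phi k v / (mixture phi \<theta> v)\<^sup>2)) (at 0)"
    using mixture_ne
    by (auto intro!: derivative_eq_intros simp: power2_eq_square field_simps simp flip: sum_negf)
  ultimately have "((\<lambda>u. deriv (\<lambda>t. Hfun V p phi (\<theta> + t *\<^sub>R axis j 1 + u *\<^sub>R axis k 1)) 0)
      has_real_derivative - (\<Sum>v<V. p v * phi j v * phi k v / (mixture phi \<theta> v)\<^sup>2)) (at 0)"
    by (subst DERIV_cong_ev[OF refl _ refl]) auto
  then show ?thesis
    unfolding hessian_def by (simp add: DERIV_imp_deriv)
qed

lemma in_simplex_vec_component_le_1:
  assumes "in_simplex_vec x"
  shows "x $ k \<le> 1"
proof -
  have "x $ k \<le> (\<Sum>i\<in>UNIV. x $ i)"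
    using assms by (intro member_le_sum) (auto simp: in_simplex_vec_def)
  then show ?thesis
    using assms by (simp add: in_simplex_vec_def)
qed

lemma in_simplex_vec_shift:
  assumes "in_simplex_vec x" "\<bar>t\<bar> \<le> x $ j" "\<bar>t\<bar> \<le> x $ k"
  shows "in_simplex_vec (x + t *\<^sub>R (axis j 1 - axis k 1))"
proof -
  have "(\<Sum>i\<in>UNIV. (x + t *\<^sub>R (axis j 1 - axis k 1)) $ i) = (\<Sum>i\<in>UNIV. x $ i)"
    by (simp add: sum.distrib sum_subtractf axis_def flip: sum_distrib_left)
  moreover have "0 \<le> (x + t *\<^sub>R (axis j 1 - axis k 1)) $ i" for i
    using assms by (auto simp: axis_def in_simplex_vec_def abs_le_iff)
  ultimately show ?thesis
    using assms(1) by (simp add: in_simplex_vec_def)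
qed

lemma vmin_le: "vmin x \<le> x $ k"
  unfolding vmin_def by (intro Min_le) auto

lemma le_vmax: "x $ k \<le> vmax x"
  unfolding vmax_def by (intro Max_ge) auto

lemma vmin_pos: "(\<And>k. 0 < x $ k) \<Longrightarrow> 0 < vmin x"
  unfolding vmin_def by (subst Min_gr_iff) auto

lemma vmin_le_vmax: "vmin x \<le> vmax x"
  using vmin_le le_vmax by (rule order_trans)

lemma vmax_le_1: "in_simplex_vec x \<Longrightarrow> vmax x \<le> 1"
  unfolding vmax_def by (subst Max_le_iff) (auto intro: in_simplex_vec_component_le_1)

lemma sum_mult_le_if_one_small:
  fixes p a b :: "'a \<Rightarrow> real"
  assumes "\<And>v. v \<in> A \<Longrightarrow> 0 \<le> p v" "\<And>v. v \<in> A \<Longrightarrow> 0 \<le> a v" "\<And>v. v \<in> A \<Longrightarrow> 0 \<le> b v"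
    and "\<And>v. v \<in> A \<Longrightarrow> a v \<le> \<delta> \<or> b v \<le> \<delta>"
  shows "(\<Sum>v\<in>A. p v * a v * b v) \<le> \<delta> * ((\<Sum>v\<in>A. p v * a v) + (\<Sum>v\<in>A. p v * b v))"
proof -
  have "p v * a v * b v \<le> \<delta> * (p v * a v + p v * b v)" if "v \<in> A" for v
  proof -
    have "a v * b v \<le> \<delta> * (a v + b v)"
      using assms(4)[OF that]
    proof
      assume "a v \<le> \<delta>"
      moreover have "0 \<le> \<delta> * a v"
        using \<open>a v \<le> \<delta>\<close> assms(2)[OF that] by simp
      ultimately show ?thesis
        using mult_right_mono[of "a v" \<delta> "b v"] assms(3)[OF that] by (simp add: algebra_simps)
    next
      assume "b v \<le> \<delta>"
      moreover have "0 \<le> \<delta> * b v"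
        using \<open>b v \<le> \<delta>\<close> assms(3)[OF that] by simp
      ultimately show ?thesis
        using mult_left_mono[of "b v" \<delta> "a v"] assms(2)[OF that] by (simp add: algebra_simps)
    qed
    from mult_left_mono[OF this assms(1)[OF that]] show ?thesis
      by (simp add: algebra_simps)
  qed
  then show ?thesis
    by (simp add: sum_mono sum_distrib_left flip: sum.distrib)
qed

lemma sum_mult_one_minus_le:
  fixes p a :: "'a \<Rightarrow> real"
  assumes "\<And>v. v \<in> A \<Longrightarrow> 0 \<le> p v" "\<And>v. v \<in> A \<Longrightarrow> 0 \<le> a v" "0 \<le> c" "0 \<le> \<delta>"
    and "\<And>v. v \<in> A \<Longrightarrow> a v \<le> \<delta> \<or> 1 - c * a v \<le> \<delta>"
  shows "(\<Sum>v\<in>A. p v * a v * (1 - c * a v)) \<le> \<delta> * ((\<Sum>v\<in>A. p v * a v) + (\<Sum>v\<in>A. p v))"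
proof -
  have "p v * a v * (1 - c * a v) \<le> \<delta> * (p v * a v + p v)" if "v \<in> A" for v
  proof -
    have "a v * (1 - c * a v) \<le> \<delta> * (a v + 1)"
      using assms(5)[OF that]
    proof
      assume "a v \<le> \<delta>"
      then show ?thesis
        using mult_nonneg_nonneg[OF assms(3) zero_le_square[of "a v"]]
          mult_nonneg_nonneg[OF assms(4) assms(2)[OF that]]
        by (simp add: algebra_simps)
    next
      assume "1 - c * a v \<le> \<delta>"
      then show ?thesis
        using mult_left_mono[of "1 - c * a v" \<delta> "a v"] assms(2)[OF that] assms(4)
        by (simp add: algebra_simps)
    qed
    from mult_left_mono[OF this assms(1)[OF that]] show ?thesis
      by (simp add: algebra_simps)
  qed
  then show ?thesis
    by (simp add: sum_mono sum_distrib_left flip: sum.distrib)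
qed

lemma diag_mat_mult_entry:
  "(diag_mat d ** A ** diag_mat d) $ i $ j = d i * A $ i $ j * d j"
  by (simp add: matrix_matrix_mult_def diag_mat_def if_distrib[where f = "\<lambda>x. _ * x"]
      if_distrib[where f = "\<lambda>x. x * _"] cong: if_cong)

locale interior_maximizer =
  fixes V :: nat and phi :: "'k::finite \<Rightarrow> nat \<Rightarrow> real" and p :: "nat \<Rightarrow> real" and \<theta> :: "real^'k"
  assumes V_pos: "1 \<le> V"
    and phi_pos: "\<And>k v. v < V \<Longrightarrow> 0 < phi k v"
    and p_simplex: "in_simplex_nat V p"
    and theta_simplex: "in_simplex_vec \<theta>"
    and theta_pos: "\<And>k. 0 < \<theta> $ k"
    and maximizer: "\<And>\<theta>'. in_simplex_vec \<theta>' \<Longrightarrow> Hfun V p phi \<theta>' \<le> Hfun V p phi \<theta>"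
begin

lemma p_nonneg: "v < V \<Longrightarrow> 0 \<le> p v"
  using p_simplex by (simp add: in_simplex_nat_def)

lemma component_mixture_le: "v < V \<Longrightarrow> \<theta> $ k * phi k v \<le> mixture phi \<theta> v"
  unfolding mixture_def using phi_pos theta_pos
  by (intro member_le_sum[where f = "\<lambda>i. \<theta> $ i * phi i v"]) (auto intro: less_imp_le)

lemma mixture_pos: "v < V \<Longrightarrow> 0 < mixture phi \<theta> v"
  unfolding mixture_def using phi_pos theta_pos by (intro sum_pos) auto

definition ratio :: "'k \<Rightarrow> nat \<Rightarrow> real" where
  "ratio k v = phi k v / mixture phi \<theta> v"

lemma ratio_nonneg: "v < V \<Longrightarrow> 0 \<le> ratio k v"
  using phi_pos mixture_pos by (simp add: ratio_def less_imp_le)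

lemma component_ratio_le_1: "v < V \<Longrightarrow> \<theta> $ k * ratio k v \<le> 1"
  using component_mixture_le mixture_pos by (simp add: ratio_def divide_simps)

text \<open>First-order optimality along the edge direction e_j - e_k of the simplex.\<close>
lemma gradient_eq:
  "(\<Sum>v<V. p v * ratio j v) = (\<Sum>v<V. p v * ratio k v)"
proof -
  let ?d = "axis j 1 - axis k 1"
  have "((\<lambda>t. Hfun V p phi (\<theta> + t *\<^sub>R ?d)) has_real_derivative
      (\<Sum>v<V. p v * ratio j v) - (\<Sum>v<V. p v * ratio k v)) (at 0)"
    using has_real_derivative_Hfun_line[OF mixture_pos, of V p ?d]
    by (simp add: ratio_def diff_divide_distrib right_diff_distrib sum_subtractf)
  moreover have "0 < min (\<theta> $ j) (\<theta> $ k)"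
    using theta_pos by simp
  moreover have "\<forall>t. \<bar>0 - t\<bar> < min (\<theta> $ j) (\<theta> $ k) \<longrightarrow>
      Hfun V p phi (\<theta> + t *\<^sub>R ?d) \<le> Hfun V p phi (\<theta> + 0 *\<^sub>R ?d)"
  proof (intro allI impI)
    fix t
    assume "\<bar>0 - t\<bar> < min (\<theta> $ j) (\<theta> $ k)"
    then have "in_simplex_vec (\<theta> + t *\<^sub>R ?d)"
      by (intro in_simplex_vec_shift theta_simplex) auto
    then show "Hfun V p phi (\<theta> + t *\<^sub>R ?d) \<le> Hfun V p phi (\<theta> + 0 *\<^sub>R ?d)"
      by (simp add: maximizer)
  qed
  ultimately have "(\<Sum>v<V. p v * ratio j v) - (\<Sum>v<V. p v * ratio k v) = 0"
    by (rule DERIV_local_max)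
  then show ?thesis
    by simp
qed

lemma gradient_eq_1: "(\<Sum>v<V. p v * ratio k v) = 1"
proof -
  have "(\<Sum>v<V. p v * ratio k v) = (\<Sum>i\<in>UNIV. \<theta> $ i) * (\<Sum>v<V. p v * ratio k v)"
    using theta_simplex by (simp add: in_simplex_vec_def)
  also have "\<dots> = (\<Sum>i\<in>UNIV. \<theta> $ i * (\<Sum>v<V. p v * ratio i v))"
    unfolding sum_distrib_right by (intro sum.cong refl) (metis gradient_eq)
  also have "\<dots> = (\<Sum>i\<in>UNIV. \<Sum>v<V. p v / mixture phi \<theta> v * (\<theta> $ i * phi i v))"
    unfolding sum_distrib_left ratio_def by (intro sum.cong refl) (simp add: field_simps)
  also have "\<dots> = (\<Sum>v<V. \<Sum>i\<in>UNIV. p v / mixture phi \<theta> v * (\<theta> $ i * phi i v))"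
    by (rule sum.swap)
  also have "\<dots> = (\<Sum>v<V. p v / mixture phi \<theta> v * mixture phi \<theta> v)"
    unfolding mixture_def sum_distrib_left ..
  also have "\<dots> = (\<Sum>v<V. p v)"
  proof (intro sum.cong refl)
    fix v
    assume "v \<in> {..<V}"
    then show "p v / mixture phi \<theta> v * mixture phi \<theta> v = p v"
      using mixture_pos[of v] by simp
  qed
  also have "\<dots> = 1"
    using p_simplex by (simp add: in_simplex_nat_def)
  finally show ?thesis .
qed

lemma sparsity_nonneg: "0 \<le> sparsity V phi"
proof -
  let ?r = "\<lambda>v. (\<Sum>j\<in>UNIV - {kmax phi v}. phi j v) / phi (kmax phi v) v"
  have "0 \<le> ?r 0"
    using V_pos phi_pos by (intro divide_nonneg_nonneg sum_nonneg) (auto intro: less_imp_le)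
  also have "\<dots> \<le> sparsity V phi"
    unfolding sparsity_def using V_pos by (intro Max_ge) auto
  finally show ?thesis .
qed

lemma sum_others_le_sparsity:
  assumes "v < V"
  shows "(\<Sum>j\<in>UNIV - {kmax phi v}. phi j v) \<le> sparsity V phi * phi (kmax phi v) v"
proof -
  have "(\<Sum>j\<in>UNIV - {kmax phi v}. phi j v) / phi (kmax phi v) v \<le> sparsity V phi"
    unfolding sparsity_def using assms by (intro Max_ge) auto
  then show ?thesis
    using phi_pos[OF assms] by (simp add: pos_divide_le_eq)
qed

lemma ratio_le_inverse_vmin:
  assumes "v < V"
  shows "ratio k v \<le> 1 / vmin \<theta>"
proof -
  have "vmin \<theta> * phi k v \<le> \<theta> $ k * phi k v"
    using vmin_le less_imp_le[OF phi_pos[OF assms]] by (rule mult_right_mono)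
  also have "\<dots> \<le> mixture phi \<theta> v"
    using assms by (rule component_mixture_le)
  finally show ?thesis
    using mixture_pos[OF assms] vmin_pos[OF theta_pos] by (simp add: ratio_def divide_simps mult.commute)
qed

lemma ratio_le_of_ne_kmax:
  assumes "v < V" "j \<noteq> kmax phi v"
  shows "ratio j v \<le> sparsity V phi / vmin \<theta>"
proof -
  have "phi j v \<le> (\<Sum>j\<in>UNIV - {kmax phi v}. phi j v)"
    using assms phi_pos by (intro member_le_sum) (auto intro: less_imp_le)
  then have "ratio j v \<le> sparsity V phi * ratio (kmax phi v) v"
    using sum_others_le_sparsity[OF assms(1)] mixture_pos[OF assms(1)]
    by (simp add: ratio_def divide_right_mono)
  also have "\<dots> \<le> sparsity V phi / vmin \<theta>"
    using mult_left_mono[OF ratio_le_inverse_vmin[OF assms(1)] sparsity_nonneg] by simp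
  finally show ?thesis .
qed

lemma one_minus_ratio_kmax_le:
  assumes "v < V"
  shows "1 - \<theta> $ kmax phi v * ratio (kmax phi v) v \<le> sparsity V phi / vmin \<theta>"
proof -
  let ?m = "kmax phi v"
  have "mixture phi \<theta> v = \<theta> $ ?m * phi ?m v + (\<Sum>i\<in>UNIV - {?m}. \<theta> $ i * phi i v)"
    unfolding mixture_def by (rule sum.remove) auto
  moreover have "(\<Sum>i\<in>UNIV - {?m}. \<theta> $ i * phi i v) \<le> (\<Sum>i\<in>UNIV - {?m}. phi i v)"
    using phi_pos[OF assms] theta_pos in_simplex_vec_component_le_1[OF theta_simplex]
    by (intro sum_mono mult_left_le_one_le) (auto intro: less_imp_le)
  ultimately have "mixture phi \<theta> v - \<theta> $ ?m * phi ?m v \<le> sparsity V phi * phi ?m v"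
    using sum_others_le_sparsity[OF assms] by simp
  then have "1 - \<theta> $ ?m * ratio ?m v \<le> sparsity V phi * ratio ?m v"
    using mixture_pos[OF assms] by (simp add: ratio_def divide_simps)
  also have "\<dots> \<le> sparsity V phi / vmin \<theta>"
    using mult_left_mono[OF ratio_le_inverse_vmin[OF assms] sparsity_nonneg] by simp
  finally show ?thesis .
qed

definition Zmat :: "real^'k^'k" where
  "Zmat = diag_mat (\<lambda>k. sqrt (\<theta> $ k)) ** (- hessian (Hfun V p phi) \<theta>) ** diag_mat (\<lambda>k. sqrt (\<theta> $ k))"

lemma Zmat_entry:
  "Zmat $ i $ j = sqrt (\<theta> $ i) * sqrt (\<theta> $ j) * (\<Sum>v<V. p v * ratio i v * ratio j v)"
proof -
  have "(\<Sum>v<V. p v * phi i v * phi j v / (mixture phi \<theta> v)\<^sup>2) = (\<Sum>v<V. p v * ratio i v * ratio j v)"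
    by (simp add: ratio_def power2_eq_square)
  then show ?thesis
    by (simp add: Zmat_def diag_mat_mult_entry hessian_Hfun[OF mixture_pos])
qed

lemma transpose_Zmat: "transpose Zmat = Zmat"
  by (simp add: transpose_def vec_eq_iff Zmat_entry mult_ac)

lemma Zmat_minus_id_entry_le:
  "\<bar>(Zmat - mat 1) $ i $ j\<bar> \<le> 2 * (sparsity V phi / vmin \<theta>)"
proof -
  let ?\<delta> = "sparsity V phi / vmin \<theta>"
  have "0 \<le> ?\<delta>"
    using sparsity_nonneg vmin_pos[OF theta_pos] by simp
  show ?thesis
  proof (cases "i = j")
    case True
    have "(\<Sum>v<V. p v * ratio i v * (1 - \<theta> $ i * ratio i v)) = 1 - Zmat $ i $ i"
      using gradient_eq_1[of i] theta_pos[of i]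
      by (simp add: Zmat_entry algebra_simps sum_subtractf sum_distrib_left)
    moreover have "0 \<le> (\<Sum>v<V. p v * ratio i v * (1 - \<theta> $ i * ratio i v))"
      using p_nonneg ratio_nonneg component_ratio_le_1 by (intro sum_nonneg) simp
    moreover have "(\<Sum>v<V. p v * ratio i v * (1 - \<theta> $ i * ratio i v))
        \<le> ?\<delta> * ((\<Sum>v<V. p v * ratio i v) + (\<Sum>v<V. p v))"
    proof (rule sum_mult_one_minus_le)
      fix v
      assume "v \<in> {..<V}"
      then show "0 \<le> p v" "0 \<le> ratio i v"
        by (simp_all add: p_nonneg ratio_nonneg)
      show "ratio i v \<le> ?\<delta> \<or> 1 - \<theta> $ i * ratio i v \<le> ?\<delta>"
        using \<open>v \<in> {..<V}\<close> ratio_le_of_ne_kmax one_minus_ratio_kmax_le by (cases "i = kmax phi v") auto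
    qed (use theta_pos[of i] \<open>0 \<le> ?\<delta>\<close> in auto)
    moreover have "?\<delta> * ((\<Sum>v<V. p v * ratio i v) + (\<Sum>v<V. p v)) = 2 * ?\<delta>"
      using gradient_eq_1[of i] p_simplex by (simp add: in_simplex_nat_def)
    ultimately have "\<bar>Zmat $ i $ i - 1\<bar> \<le> 2 * ?\<delta>"
      by linarith
    then show ?thesis
      using True by (simp add: mat_def)
  next
    case False
    have "(\<Sum>v<V. p v * ratio i v * ratio j v)
        \<le> ?\<delta> * ((\<Sum>v<V. p v * ratio i v) + (\<Sum>v<V. p v * ratio j v))"
    proof (rule sum_mult_le_if_one_small)
      fix v
      assume "v \<in> {..<V}"
      then show "0 \<le> p v" "0 \<le> ratio i v" "0 \<le> ratio j v"
        by (simp_all add: p_nonneg ratio_nonneg)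
      show "ratio i v \<le> ?\<delta> \<or> ratio j v \<le> ?\<delta>"
        using \<open>v \<in> {..<V}\<close> ratio_le_of_ne_kmax False by (cases "i = kmax phi v") auto
    qed
    also have "\<dots> = 2 * ?\<delta>"
      by (simp add: gradient_eq_1)
    finally have "(\<Sum>v<V. p v * ratio i v * ratio j v) \<le> 2 * ?\<delta>" .
    moreover have "0 \<le> (\<Sum>v<V. p v * ratio i v * ratio j v)"
      using p_nonneg ratio_nonneg by (intro sum_nonneg) simp
    moreover have "sqrt (\<theta> $ i) * sqrt (\<theta> $ j) \<le> 1"
      using in_simplex_vec_component_le_1[OF theta_simplex] theta_pos
      by (intro mult_le_one) (auto intro: less_imp_le)
    moreover have "0 \<le> sqrt (\<theta> $ i) * sqrt (\<theta> $ j)"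
      using theta_pos by (simp add: less_imp_le)
    ultimately have "0 \<le> Zmat $ i $ j \<and> Zmat $ i $ j \<le> 2 * ?\<delta>"
      unfolding Zmat_entry by (meson mult_left_le_one_le mult_nonneg_nonneg order_trans)
    then show ?thesis
      using False by (simp add: mat_def)
  qed
qed

theorem Zmat_bound:
  assumes "sparsity V phi < eps0 CARD('k) (vmin \<theta>) (vmax \<theta>)"
  shows "frob_norm (Zmat - mat 1) / sqrt (lambda_min Zmat)
           \<le> 2 * sqrt 2 * CARD('k) / vmin \<theta> * sparsity V phi"
proof -
  have frob_le: "frob_norm (Zmat - mat 1) \<le> CARD('k) * (2 * (sparsity V phi / vmin \<theta>))"
    by (rule frob_norm_le_entrywise) (rule Zmat_minus_id_entry_le)
  also have "\<dots> < 1/2"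
    using less_eps0_imp_less_half[OF vmin_pos[OF theta_pos] vmin_le_vmax vmax_le_1[OF theta_simplex]
        _ sparsity_nonneg assms]
    by (simp add: Suc_le_eq)
  finally have "frob_norm (Zmat - mat 1) \<le> 1/2"
    by simp
  then have "frob_norm (Zmat - mat 1) / sqrt (lambda_min Zmat) \<le> sqrt 2 * frob_norm (Zmat - mat 1)"
    by (rule frob_norm_div_sqrt_lambda_min_le[OF transpose_Zmat])
  also have "\<dots> \<le> sqrt 2 * (CARD('k) * (2 * (sparsity V phi / vmin \<theta>)))"
    using frob_le by (rule mult_left_mono) simp
  finally show ?thesis
    by (simp add: field_simps)
qed

end

theorem lemma6:
  assumes "CARD('k::finite) \<ge> 3"
  shows "\<exists>C :: real \<Rightarrow> real \<Rightarrow> real.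
    (\<forall>tmin tmax. C tmin tmax > 0) \<and>
    (\<forall>(V::nat) (phi :: 'k \<Rightarrow> nat \<Rightarrow> real) (p :: nat \<Rightarrow> real) (\<theta> :: real^'k).
       V \<ge> 1 \<and>
       (\<forall>k. in_simplex_nat V (phi k)) \<and> (\<forall>k. \<forall>v<V. phi k v > 0) \<and>
       in_simplex_nat V p \<and>
       in_simplex_vec \<theta> \<and> (\<forall>k. \<theta> $ k > 0) \<and>
       (\<forall>\<theta>'. in_simplex_vec \<theta>' \<longrightarrow> Hfun V p phi \<theta>' \<le> Hfun V p phi \<theta>) \<and>
       (\<forall>v<V. \<exists>!k. \<forall>j. phi j v \<le> phi k v) \<and>
       sparsity V phi < eps0 CARD('k) (vmin \<theta>) (vmax \<theta>)
     \<longrightarrow>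
       (let Y = - hessian (Hfun V p phi) \<theta>;
            S = diag_mat (\<lambda>k. sqrt (\<theta> $ k));
            Z = S ** Y ** S
        in frob_norm (Z - mat 1) / sqrt (lambda_min Z)
             \<le> C (vmin \<theta>) (vmax \<theta>) * sparsity V phi))"
proof (intro exI[of _ "\<lambda>tmin _. if 0 < tmin then 2 * sqrt 2 * CARD('k) / tmin else 1"]
    conjI allI impI, goal_cases)
  case (1 tmin tmax)
  then show ?case
    by simp
next
  case (2 V phi p \<theta>)
  then interpret interior_maximizer V phi p \<theta>
    by unfold_locales auto
  from 2 show ?case
    using Zmat_bound vmin_pos[OF theta_pos] by (simp add: Let_def Zmat_def)
qed

end
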